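(* Let $n\geq 2$ and let $R$ be the unital associative ring $\langle x,y \mid x^n=0,\ y^n=0,\ xy+y^{n-1}x^{n-1}=1\rangle$. For any integers $k,l,m\geq 0$ with $m\geq l$, the following hold in $R$: $$x^ky^lx^m = \begin{cases} y^{l-k}x^m & \text{if } l\geq k,\\ x^{k+m-l} & \text{if } l\leq k,\end{cases}\qquad y^mx^ly^k = \begin{cases} y^{m}x^{l-k} & \text{if } l\geq k,\\ y^{k+m-l} & \text{if } l\leq k.\end{cases}$$
   Context: $R$ denotes the quotient of the free unital associative ring $\mathbb{Z}\langle x,y\rangle$ by the two-sided ideal generated by $x^n$, $y^n$ and $xy+y^{n-1}x^{n-1}-1$; $x^0=y^0=1$. *)

theory Defs
  imports Main
begin

end

theory Submission
  imports Defs
begin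

text \<open>Using \<open>x * y = 1 - y ^ (n - 1) * x ^ (n - 1)\<close>, one factor \<open>x * y\<close> can be cancelled
  from \<open>x ^ k * y ^ l * x ^ m\<close> as soon as the correction term \<open>x ^ (n - 1) * y ^ (l - 1) * x ^ m\<close>
  vanishes; by induction on \<open>l\<close> that term equals \<open>x ^ (n + m - l)\<close>, which is zero because
  \<open>l \<le> m\<close>. The second identity is the first one in the opposite ring: the relations are
  invariant under the anti-automorphism exchanging \<open>x\<close> and \<open>y\<close>.\<close>

lemma power_eq_0_mono:
  fixes x :: "'a::{monoid_mult,mult_zero}"
  assumes "x ^ n = 0" and "n \<le> p"
  shows "x ^ p = 0"
proof -
  have "x ^ p = x ^ n * x ^ (p - n)"
    using \<open>n \<le> p\<close> by (simp flip: power_add)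
  with \<open>x ^ n = 0\<close> show ?thesis by simp
qed

lemma x_power_y_power_x_power:
  fixes x y :: "'a::ring_1"
  assumes xn: "x ^ n = 0" and yn: "y ^ n = 0"
    and rel: "x * y + y ^ (n - 1) * x ^ (n - 1) = 1"
    and "l \<le> m"
  shows "x ^ k * y ^ l * x ^ m = (if k \<le> l then y ^ (l - k) * x ^ m else x ^ (k + m - l))"
  using \<open>l \<le> m\<close>
proof (induction l arbitrary: k m)
  case 0
  then show ?case by (simp add: power_add)
next
  case (Suc l)
  consider "n \<le> Suc l" | "k = 0" | j where "k = Suc j" "Suc l < n"
    by (cases k) force+
  then show ?case
  proof cases
    case 1
    then have "y ^ Suc l = 0" "x ^ m = 0" "\<not> k \<le> Suc l \<Longrightarrow> x ^ (k + m - Suc l) = 0"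
      using Suc.prems power_eq_0_mono[OF xn] power_eq_0_mono[OF yn] by (simp_all del: power_Suc)
    then show ?thesis by simp
  next
    case 2
    then show ?thesis by simp
  next
    case 3
    have correction_vanishes: "x ^ (n - 1) * y ^ l * x ^ m = 0"
      using Suc.IH[of m "n - 1"] Suc.prems 3 power_eq_0_mono[OF xn] by simp
    have xy: "x * y = 1 - y ^ (n - 1) * x ^ (n - 1)"
      using rel by (simp add: eq_diff_eq)
    have "x ^ k * y ^ Suc l * x ^ m = x ^ j * (x * y) * (y ^ l * x ^ m)"
      unfolding 3 power_Suc2[of x j] power_Suc[of y l] by (simp only: mult.assoc)
    also have "\<dots> = x ^ j * y ^ l * x ^ m - x ^ j * y ^ (n - 1) * (x ^ (n - 1) * y ^ l * x ^ m)"
      unfolding xy by (simp add: algebra_simps)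
    also have "\<dots> = x ^ j * y ^ l * x ^ m"
      by (simp only: correction_vanishes mult_zero_right diff_zero)
    also have "\<dots> = (if j \<le> l then y ^ (l - j) * x ^ m else x ^ (j + m - l))"
      using Suc.IH Suc.prems by simp
    finally show ?thesis
      using 3 by (simp add: Suc_diff_le)
  qed
qed

typedef 'a opposite = "UNIV :: 'a set"
  morphisms op_rep op_abs
  by simp

setup_lifting type_definition_opposite

instantiation opposite :: (ring_1) ring_1
begin

lift_definition zero_opposite :: "'a opposite" is 0 .
lift_definition one_opposite :: "'a opposite" is 1 .
lift_definition plus_opposite :: "'a opposite \<Rightarrow> 'a opposite \<Rightarrow> 'a opposite" is "(+)" .
lift_definition minus_opposite :: "'a opposite \<Rightarrow> 'a opposite \<Rightarrow> 'a opposite" is "(-)" .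
lift_definition uminus_opposite :: "'a opposite \<Rightarrow> 'a opposite" is uminus .
lift_definition times_opposite :: "'a opposite \<Rightarrow> 'a opposite \<Rightarrow> 'a opposite" is "\<lambda>a b. b * a" .

instance
  by standard (transfer; simp add: algebra_simps)+

end

lemma op_rep_power: "op_rep (a ^ n) = op_rep a ^ n"
  by (induction n) (simp_all add: one_opposite.rep_eq times_opposite.rep_eq power_commutes)

lemma y_power_x_power_y_power:
  fixes x y :: "'a::ring_1"
  assumes "x ^ n = 0" and "y ^ n = 0"
    and "x * y + y ^ (n - 1) * x ^ (n - 1) = 1"
    and "l \<le> m"
  shows "y ^ m * x ^ l * y ^ k = (if k \<le> l then y ^ m * x ^ (l - k) else y ^ (k + m - l))"
proof -
  have rep: "op_rep (op_abs a ^ p) = a ^ p" for a :: 'a and p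
    by (simp add: op_rep_power op_abs_inverse)
  have "op_abs y ^ n = 0" "op_abs x ^ n = 0"
    "op_abs y * op_abs x + op_abs x ^ (n - 1) * op_abs y ^ (n - 1) = 1"
    using assms(1-3)
    by (simp_all flip: op_rep_inject add: rep op_abs_inverse plus_opposite.rep_eq times_opposite.rep_eq
        zero_opposite.rep_eq one_opposite.rep_eq)
  from x_power_y_power_x_power[OF this \<open>l \<le> m\<close>, of k]
  have "op_rep (op_abs y ^ k * op_abs x ^ l * op_abs y ^ m)
      = op_rep (if k \<le> l then op_abs x ^ (l - k) * op_abs y ^ m else op_abs y ^ (k + m - l))"
    by simp
  then show ?thesis
    by (simp add: rep times_opposite.rep_eq mult.assoc split: if_splits)
qed

theorem lemma1:
  fixes x y :: "'a::ring_1" and n k l m :: nat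
  assumes "n \<ge> 2"
    and "x ^ n = 0" and "y ^ n = 0"
    and "x * y + y ^ (n - 1) * x ^ (n - 1) = 1"
    and "l \<le> m"
  shows "x ^ k * y ^ l * x ^ m = (if k \<le> l then y ^ (l - k) * x ^ m else x ^ (k + m - l))
       \<and> y ^ m * x ^ l * y ^ k = (if k \<le> l then y ^ m * x ^ (l - k) else y ^ (k + m - l))"
  using x_power_y_power_x_power[OF assms(2-5)] y_power_x_power_y_power[OF assms(2-5)] by blast

end
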